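(* Let $|\psi\rangle$ be a pure three-qubit state with two-qubit reduced states $\rho_{AB},\rho_{AC},\rho_{BC}$. Then $S_{AB}>S_{AC}>S_{BC}$ if and only if $\mathcal C_{AB}>\mathcal C_{AC}>\mathcal C_{BC}$.
   Context: For a two-qubit state $\rho$ let $t_{kl}=\mathrm{Tr}[\rho\,\sigma_k\otimes\sigma_l]$ ($\sigma_k$ Pauli matrices) and $S(\rho)=\sum_{k,l=1}^3 t_{kl}^2$; $S_{ij}=S(\rho_{ij})$. $\mathcal C_{ij}$ denotes the (Wootters) concurrence of $\rho_{ij}$: $\mathcal C(\rho)=\max\{0,\lambda_1-\lambda_2-\lambda_3-\lambda_4\}$, where $\lambda_1\ge\dots\ge\lambda_4$ are the square roots of the eigenvalues of $\rho(\sigma_2\otimes\sigma_2)\rho^*(\sigma_2\otimes\sigma_2)$. *)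

theory Defs
  imports "Jordan_Normal_Form.Char_Poly" "HOL-Computational_Algebra.Polynomial"
begin

(* Three-qubit pure state: psi is a complex vector of dimension 8, with
   computational basis index 4*a + 2*b + c for qubits A,B,C (a,b,c in {0,1}).
   Two-qubit operators are 4x4 complex matrices with basis index 2*i + j. *)

definition tr :: "complex mat \<Rightarrow> complex" where
  "tr M = (\<Sum>i<dim_row M. M $$ (i, i))"

definition pauli :: "nat \<Rightarrow> complex mat" where
  "pauli k = (if k = 1 then mat_of_rows_list 2 [[0, 1], [1, 0]]
              else if k = 2 then mat_of_rows_list 2 [[0, -\<i>], [\<i>, 0]]
              else if k = 3 then mat_of_rows_list 2 [[1, 0], [0, -1]]
              else 1\<^sub>m 2)"

definition kron2 :: "complex mat \<Rightarrow> complex mat \<Rightarrow> complex mat" where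
  "kron2 A B = mat 4 4 (\<lambda>(r, s). A $$ (r div 2, s div 2) * B $$ (r mod 2, s mod 2))"

definition rho_AB :: "complex vec \<Rightarrow> complex mat" where
  "rho_AB psi = mat 4 4 (\<lambda>(r, s). \<Sum>c<2. psi $ (2 * r + c) * cnj (psi $ (2 * s + c)))"

definition rho_AC :: "complex vec \<Rightarrow> complex mat" where
  "rho_AC psi = mat 4 4 (\<lambda>(r, s). \<Sum>b<2.
      psi $ (4 * (r div 2) + 2 * b + r mod 2) * cnj (psi $ (4 * (s div 2) + 2 * b + s mod 2)))"

definition rho_BC :: "complex vec \<Rightarrow> complex mat" where
  "rho_BC psi = mat 4 4 (\<lambda>(r, s). \<Sum>a<2. psi $ (4 * a + r) * cnj (psi $ (4 * a + s)))"

(* correlation tensor t_kl = Tr[rho sigma_k (x) sigma_l]  (real for Hermitian rho) *)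
definition corr :: "complex mat \<Rightarrow> nat \<Rightarrow> nat \<Rightarrow> real" where
  "corr \<rho> k l = Re (tr (\<rho> * kron2 (pauli k) (pauli l)))"

definition S_corr :: "complex mat \<Rightarrow> real" where
  "S_corr \<rho> = (\<Sum>k\<in>{1..3}. \<Sum>l\<in>{1..3}. (corr \<rho> k l)\<^sup>2)"

definition spin_flip :: "complex mat \<Rightarrow> complex mat" where
  "spin_flip \<rho> = \<rho> * kron2 (pauli 2) (pauli 2) * map_mat cnj \<rho> * kron2 (pauli 2) (pauli 2)"

(* square roots of the eigenvalues (with multiplicity) of rho*rho~, in increasing order;
   these eigenvalues are real and nonnegative for a density matrix *)
definition wootters_lambdas :: "complex mat \<Rightarrow> real list" where
  "wootters_lambdas \<rho> =
     sorted_list_of_multiset (image_mset (\<lambda>z. sqrt (Re z)) (proots (char_poly (spin_flip \<rho>))))"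

definition concurrence :: "complex mat \<Rightarrow> real" where
  "concurrence \<rho> = (let l = wootters_lambdas \<rho> in
      max 0 (l ! 3 - l ! 2 - l ! 1 - l ! 0))"

end

theory Submission
  imports Defs
begin

(* Write the pure state as a 4x2 matrix M whose rows are indexed by the kept pair of qubits and
   whose columns by the traced-out one, so that rho_XY = M M^dagger.  The nonzero eigenvalues of
   rho rho~ are those of conj(tau) tau, where tau = M^T (sigma_y (x) sigma_y) M is Wootters'
   symmetric 2x2 matrix; hence C_XY = sqrt (|tau|^2 - 2 |det tau|) with |tau| the Frobenius norm.
   For a three-qubit pure state det tau is the same for all three pairs (it measures the
   three-tangle), and so is S_XY - 3 |tau|^2.  Hence both orderings are the ordering of
   |tau_XY|^2. *)

lemma assoc_mult_mat_dim:
  "dim_col A = dim_row B \<Longrightarrow> dim_col B = dim_row C \<Longrightarrow> A * B * C = A * (B * C)"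
  by (rule assoc_mult_mat[OF carrier_matI carrier_matI carrier_matI]) auto

lemma comm_ring_hom_cnj: "comm_ring_hom cnj"
  by unfold_locales simp_all

lemma map_mat_cnj_mult:
  "dim_col A = dim_row B \<Longrightarrow> map_mat cnj (A * B) = map_mat cnj A * map_mat cnj B"
  using comm_ring_hom_cnj semiring_hom.mat_hom_mult[OF _ carrier_matI carrier_matI]
  by (metis comm_ring_hom.axioms ring_hom.axioms(1))

lemma det_2x2:
  assumes "A \<in> carrier_mat 2 2"
  shows "det A = A $$ (0, 0) * A $$ (1, 1) - A $$ (0, 1) * A $$ (1, 0)"
  by (subst laplace_expansion_column[OF assms, of 0])
    (use assms in \<open>auto simp: cofactor_def mat_delete_def det_single lessThan_Suc numeral_2_eq_2\<close>)

text \<open>Sylvester's determinant identity, from the two block triangular factorisations of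
  the matrix with blocks \<open>x \<cdot> 1, X, Y, 1\<close>.\<close>

lemma det_smult_one_minus_mult_commute:
  fixes X Y :: "'a :: idom mat"
  assumes X: "X \<in> carrier_mat n m" and Y: "Y \<in> carrier_mat m n"
  shows "x ^ m * det (x \<cdot>\<^sub>m 1\<^sub>m n - X * Y) = x ^ n * det (x \<cdot>\<^sub>m 1\<^sub>m m - Y * X)"
proof -
  define B where "B = four_block_mat (x \<cdot>\<^sub>m 1\<^sub>m n) X Y (1\<^sub>m m)"
  define R where "R = four_block_mat (1\<^sub>m n) (0\<^sub>m n m) (- Y) (1\<^sub>m m)"
  define L where "L = four_block_mat (1\<^sub>m n) (0\<^sub>m n m) (- Y) (x \<cdot>\<^sub>m 1\<^sub>m m)"
  have carrier: "B \<in> carrier_mat (n + m) (n + m)" "R \<in> carrier_mat (n + m) (n + m)"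
    "L \<in> carrier_mat (n + m) (n + m)"
    using X Y by (simp_all add: B_def R_def L_def)
  have "det R = det (1\<^sub>m n) * det (1\<^sub>m m)"
    unfolding R_def using Y by (intro det_four_block_mat_upper_right_zero) auto
  then have det_R: "det R = 1" by simp
  have "det L = det (1\<^sub>m n) * det (x \<cdot>\<^sub>m 1\<^sub>m m)"
    unfolding L_def using Y by (intro det_four_block_mat_upper_right_zero) auto
  then have det_L: "det L = x ^ m" by simp
  have BR: "B * R = four_block_mat (x \<cdot>\<^sub>m 1\<^sub>m n - X * Y) X (0\<^sub>m m n) (1\<^sub>m m)"
    unfolding B_def R_def using X Y
    by (subst mult_four_block_mat[of _ n n _ m _ m]) (auto simp: scalar_prod_def)
  have "det (B * R) = det (x \<cdot>\<^sub>m 1\<^sub>m n - X * Y) * det (1\<^sub>m m)"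
    unfolding BR using X Y by (intro det_four_block_mat_lower_left_zero) auto
  then have det_B: "det B = det (x \<cdot>\<^sub>m 1\<^sub>m n - X * Y)"
    using det_mult[OF carrier(1,2)] det_R by simp
  have "Y * (x \<cdot>\<^sub>m 1\<^sub>m n) = x \<cdot>\<^sub>m 1\<^sub>m m * Y"
    using Y by (simp add: mult_smult_distrib[OF Y one_carrier_mat]
        mult_smult_assoc_mat[OF one_carrier_mat Y])
  then have LB: "L * B = four_block_mat (x \<cdot>\<^sub>m 1\<^sub>m n) X (0\<^sub>m m n) (x \<cdot>\<^sub>m 1\<^sub>m m - Y * X)"
    unfolding B_def L_def using X Y
    by (subst mult_four_block_mat[of _ n n _ m _ m]) (auto simp: minus_add_uminus_mat)
  have "det (L * B) = det (x \<cdot>\<^sub>m 1\<^sub>m n) * det (x \<cdot>\<^sub>m 1\<^sub>m m - Y * X)"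
    unfolding LB using X Y by (intro det_four_block_mat_lower_left_zero) auto
  then have "x ^ m * det B = x ^ n * det (x \<cdot>\<^sub>m 1\<^sub>m m - Y * X)"
    using det_mult[OF carrier(3,1)] det_L by simp
  then show ?thesis
    unfolding det_B .
qed

lemma poly_char_poly_eq_det:
  fixes A :: "'a :: field mat"
  assumes "A \<in> carrier_mat n n"
  shows "poly (char_poly A) k = det (k \<cdot>\<^sub>m 1\<^sub>m n - A)"
proof -
  have "- char_matrix A k = k \<cdot>\<^sub>m 1\<^sub>m n - A"
    using assms by (auto simp: char_matrix_def)
  then show ?thesis
    using char_poly_matrix[OF assms] by simp
qed

lemma char_poly_mult_commute:
  fixes X Y :: "'a :: field_char_0 mat"
  assumes X: "X \<in> carrier_mat n m" and Y: "Y \<in> carrier_mat m n" and "m \<le> n"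
  shows "char_poly (X * Y) = monom 1 (n - m) * char_poly (Y * X)"
proof -
  have "poly (monom 1 m * char_poly (X * Y)) k = poly (monom 1 n * char_poly (Y * X)) k" for k
    using det_smult_one_minus_mult_commute[OF X Y, of k] X Y
    by (simp add: poly_monom poly_char_poly_eq_det[of _ n] poly_char_poly_eq_det[of _ m])
  then have "monom 1 m * char_poly (X * Y) = monom 1 n * char_poly (Y * X)"
    by (simp add: poly_eq_poly_eq_iff[symmetric] fun_eq_iff)
  also have "monom 1 n = monom 1 m * (monom 1 (n - m) :: 'a poly)"
    using \<open>m \<le> n\<close> by (simp add: mult_monom)
  finally show ?thesis
    by (simp add: mult.assoc)
qed

lemma char_poly_2x2:
  fixes A :: "'a :: field_char_0 mat"
  assumes A: "A \<in> carrier_mat 2 2"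
  shows "char_poly A = [:det A, - (A $$ (0, 0) + A $$ (1, 1)), 1:]"
proof -
  have "k \<cdot>\<^sub>m 1\<^sub>m 2 - A \<in> carrier_mat 2 2" for k
    using A by (auto intro: minus_carrier_mat)
  then have "poly (char_poly A) k = poly [:det A, - (A $$ (0, 0) + A $$ (1, 1)), 1:] k" for k
    using A by (simp add: poly_char_poly_eq_det det_2x2 algebra_simps)
  then show ?thesis
    by (simp add: poly_eq_poly_eq_iff[symmetric] fun_eq_iff)
qed

definition frobenius_norm_sq :: "complex mat \<Rightarrow> real" where
  "frobenius_norm_sq N = (\<Sum>i<dim_row N. \<Sum>j<dim_col N. (cmod (N $$ (i, j)))\<^sup>2)"

lemma char_poly_cnj_mult_symmetric_2x2:
  assumes N: "N \<in> carrier_mat 2 2" and sym: "N\<^sup>T = N"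
  shows "char_poly (map_mat cnj N * N) =
    [:of_real ((cmod (det N))\<^sup>2), - of_real (frobenius_norm_sq N), 1:]"
proof -
  have norm_sq: "of_real ((cmod z)\<^sup>2) = cnj z * z" for z
    by (subst complex_norm_square) (rule mult.commute)
  have "N $$ (1, 0) = N $$ (0, 1)"
    using N arg_cong[OF sym, of "\<lambda>A. A $$ (0, 1)"] by simp
  then have "frobenius_norm_sq N
      = (cmod (N $$ (0, 0)))\<^sup>2 + 2 * (cmod (N $$ (0, 1)))\<^sup>2 + (cmod (N $$ (1, 1)))\<^sup>2"
    and "map_mat cnj N * N \<in> carrier_mat 2 2"
    and "(map_mat cnj N * N) $$ (0, 0) + (map_mat cnj N * N) $$ (1, 1)
      = cnj (N $$ (0, 0)) * N $$ (0, 0) + 2 * (cnj (N $$ (0, 1)) * N $$ (0, 1))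
        + cnj (N $$ (1, 1)) * N $$ (1, 1)"
    using N by (auto simp: frobenius_norm_sq_def scalar_prod_def numeral_2_eq_2)
  moreover have "det (map_mat cnj N * N) = cnj (det N) * det N"
    using N comm_ring_hom.hom_det[OF comm_ring_hom_cnj] by (simp add: det_mult[of _ 2])
  ultimately show ?thesis
    by (simp add: char_poly_2x2 norm_sq del: of_real_power)
qed

lemma det_le_frobenius_norm_sq_symmetric_2x2:
  assumes N: "N \<in> carrier_mat 2 2" and sym: "N\<^sup>T = N"
  shows "2 * cmod (det N) \<le> frobenius_norm_sq N"
proof -
  define a b d where "a = N $$ (0, 0)" and "b = N $$ (0, 1)" and "d = N $$ (1, 1)"
  have "N $$ (1, 0) = b"
    using N arg_cong[OF sym, of "\<lambda>A. A $$ (0, 1)"] by (simp add: b_def)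
  then have "det N = a * d - b * b" and frobenius:
    "frobenius_norm_sq N = (cmod a)\<^sup>2 + 2 * (cmod b)\<^sup>2 + (cmod d)\<^sup>2"
    using N by (auto simp: det_2x2 frobenius_norm_sq_def numeral_2_eq_2 a_def b_def d_def)
  then have "cmod (det N) \<le> cmod a * cmod d + (cmod b)\<^sup>2"
    by (metis norm_mult norm_triangle_ineq4 power2_eq_square)
  moreover have "2 * (cmod a * cmod d) \<le> (cmod a)\<^sup>2 + (cmod d)\<^sup>2"
    using sum_squares_bound[of "cmod a" "cmod d"] by (simp add: power2_eq_square)
  ultimately show ?thesis
    unfolding frobenius by linarith
qed

section \<open>Concurrence of a state of rank at most two\<close>

lemma concurrence_of_proots:
  assumes roots: "proots (char_poly (spin_flip A)) = {#0, 0, of_real r1, of_real r2#}"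
    and "0 \<le> r2" and "r2 \<le> r1"
  shows "concurrence A = sqrt r1 - sqrt r2"
proof -
  have "wootters_lambdas A = [0, 0, sqrt r2, sqrt r1]"
    unfolding wootters_lambdas_def roots using assms(2,3) by (auto simp: real_sqrt_le_mono)
  then show ?thesis
    unfolding concurrence_def using assms(2,3) by (simp add: real_sqrt_le_mono)
qed

lemma concurrence_of_char_poly:
  assumes char_poly: "char_poly (spin_flip A) = monom 1 2 * [:of_real (D\<^sup>2), - of_real T, 1:]"
    and "0 \<le> D" and "2 * D \<le> T"
  shows "concurrence A = sqrt (T - 2 * D)"
proof -
  define s where "s = sqrt (T\<^sup>2 - 4 * D\<^sup>2)"
  define r1 where "r1 = (T + s) / 2"
  define r2 where "r2 = (T - s) / 2"
  have "(2 * D)\<^sup>2 \<le> T\<^sup>2"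
    using assms(2,3) by (intro power_mono) auto
  then have s: "0 \<le> s" "s\<^sup>2 = T\<^sup>2 - 4 * D\<^sup>2"
    by (simp_all add: s_def power_mult_distrib)
  have "s \<le> sqrt (T\<^sup>2)"
    unfolding s_def by (rule real_sqrt_le_mono) simp
  then have "s \<le> T"
    using assms(2,3) by simp
  then have r: "0 \<le> r2" "r2 \<le> r1" "r1 + r2 = T"
    using s(1) by (simp_all add: r1_def r2_def field_simps)
  have "r1 * r2 = (T\<^sup>2 - s\<^sup>2) / 4"
    by (simp add: r1_def r2_def power2_eq_square algebra_simps)
  then have r_prod: "r1 * r2 = D\<^sup>2"
    using s(2) by simp
  have "[:of_real (D\<^sup>2), - of_real T, 1:] = [:- of_real r1, 1:] * [:- of_real r2 :: complex, 1:]"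
    by (simp flip: r(3) r_prod)
  then have "proots (char_poly (spin_flip A))
      = proots ([:0, 1:] ^ 2 * ([:- of_real r1, 1:] * [:- of_real r2, 1:]))"
    unfolding char_poly by (simp add: monom_altdef)
  also have "\<dots> = proots ([:0, 1:] ^ 2) + (proots [:- of_real r1, 1:] + proots [:- of_real r2, 1:])"
    by (subst proots_mult, simp, simp, subst proots_mult) simp_all
  also have "\<dots> = {#0, 0, of_real r1, of_real r2#}"
    by (subst proots_power) (simp add: numeral_2_eq_2)
  finally have "concurrence A = sqrt r1 - sqrt r2"
    using r(1,2) by (rule concurrence_of_proots)
  also have "\<dots> = sqrt (T - 2 * D)"
  proof (rule real_sqrt_unique[symmetric])
    have "sqrt r1 * sqrt r2 = D"
      using r_prod assms(2) by (simp add: real_sqrt_mult[symmetric])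
    then show "(sqrt r1 - sqrt r2)\<^sup>2 = T - 2 * D"
      using r by (simp add: power2_diff)
    show "0 \<le> sqrt r1 - sqrt r2"
      using r(2) by (simp add: real_sqrt_le_mono)
  qed
  finally show ?thesis .
qed

lemma less_4_cases: "(i :: nat) < 4 \<Longrightarrow> i = 0 \<or> i = 1 \<or> i = 2 \<or> i = 3"
  by auto

lemma lessThan_2_eq: "{..<2} = {0, 1 :: nat}"
  and lessThan_4_eq: "{..<4} = {0, 1, 2, 3 :: nat}"
  and atLeastAtMost_1_3_eq: "{1..3} = {1, 2, 3 :: nat}"
  by auto

lemma sigma_yy_carrier: "kron2 (pauli 2) (pauli 2) \<in> carrier_mat 4 4"
  by (simp add: kron2_def)

lemma sigma_yy_real_symmetric:
  "map_mat cnj (kron2 (pauli 2) (pauli 2)) = kron2 (pauli 2) (pauli 2)"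
  "(kron2 (pauli 2) (pauli 2))\<^sup>T = kron2 (pauli 2) (pauli 2)"
  by (auto intro!: eq_matI dest!: less_4_cases simp: kron2_def pauli_def mat_of_rows_list_def)

definition wootters_tau :: "complex mat \<Rightarrow> complex mat" where
  "wootters_tau M = M\<^sup>T * kron2 (pauli 2) (pauli 2) * M"

lemma dim_wootters_tau [simp]:
  "dim_row (wootters_tau M) = dim_col M" "dim_col (wootters_tau M) = dim_col M"
  by (simp_all add: wootters_tau_def)

lemma wootters_tau_carrier: "M \<in> carrier_mat 4 k \<Longrightarrow> wootters_tau M \<in> carrier_mat k k"
  using sigma_yy_carrier by (simp add: wootters_tau_def)

lemma wootters_tau_symmetric:
  assumes M: "M \<in> carrier_mat 4 k"
  shows "(wootters_tau M)\<^sup>T = wootters_tau M"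
proof -
  let ?S = "kron2 (pauli 2) (pauli 2)"
  have "(M\<^sup>T * ?S * M)\<^sup>T = M\<^sup>T * (M\<^sup>T * ?S)\<^sup>T"
    using M sigma_yy_carrier by (intro transpose_mult) auto
  also have "(M\<^sup>T * ?S)\<^sup>T = ?S * M"
    using M sigma_yy_carrier by (subst transpose_mult) (auto simp: sigma_yy_real_symmetric)
  finally show ?thesis
    using M sigma_yy_carrier by (simp add: wootters_tau_def assoc_mult_mat_dim)
qed

lemma index_wootters_tau:
  assumes "dim_row M = 4" and "a < dim_col M" and "b < dim_col M"
  shows "wootters_tau M $$ (a, b) = M $$ (1, a) * M $$ (2, b) + M $$ (2, a) * M $$ (1, b)
    - M $$ (0, a) * M $$ (3, b) - M $$ (3, a) * M $$ (0, b)"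
  using assms
  by (simp add: wootters_tau_def scalar_prod_def atLeast0LessThan lessThan_4_eq kron2_def pauli_def
      mat_of_rows_list_def algebra_simps)

lemma char_poly_spin_flip_gram:
  assumes M: "M \<in> carrier_mat 4 k" and "k \<le> 4"
  shows "char_poly (spin_flip (M * (map_mat cnj M)\<^sup>T))
    = monom 1 (4 - k) * char_poly (map_mat cnj (wootters_tau M) * wootters_tau M)"
proof -
  define S where "S = kron2 (pauli 2) (pauli 2)"
  define Mc where "Mc = map_mat cnj M"
  define Mt where "Mt = M\<^sup>T"
  define Mct where "Mct = Mc\<^sup>T"
  have carrier: "S \<in> carrier_mat 4 4" "Mc \<in> carrier_mat 4 k" "Mt \<in> carrier_mat k 4"
    "Mct \<in> carrier_mat k 4"
    using M sigma_yy_carrier by (auto simp: S_def Mc_def Mt_def Mct_def)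
  have "map_mat cnj (M * Mct) = Mc * Mt"
    using M by (auto simp: Mc_def Mt_def Mct_def scalar_prod_def)
  then have "spin_flip (M * Mct) = M * (Mct * S * Mc * Mt * S)"
    using M carrier by (simp add: spin_flip_def S_def[symmetric] assoc_mult_mat_dim)
  moreover have "map_mat cnj (wootters_tau M) = Mct * S * Mc"
    unfolding wootters_tau_def S_def[symmetric] using M carrier(1)
    by (simp add: map_mat_cnj_mult Mc_def Mct_def S_def sigma_yy_real_symmetric map_mat_transpose)
  ultimately show ?thesis
    using char_poly_mult_commute[of M 4 k "Mct * S * Mc * Mt * S"] M carrier \<open>k \<le> 4\<close>
    by (simp add: wootters_tau_def Mt_def[symmetric] S_def[symmetric] Mc_def[symmetric]
        Mct_def[symmetric] assoc_mult_mat_dim)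
qed

lemma concurrence_gram:
  assumes M: "M \<in> carrier_mat 4 2"
  shows "concurrence (M * (map_mat cnj M)\<^sup>T)
    = sqrt (frobenius_norm_sq (wootters_tau M) - 2 * cmod (det (wootters_tau M)))"
proof (rule concurrence_of_char_poly)
  show "char_poly (spin_flip (M * (map_mat cnj M)\<^sup>T)) = monom 1 2 *
      [:of_real ((cmod (det (wootters_tau M)))\<^sup>2), - of_real (frobenius_norm_sq (wootters_tau M)), 1:]"
    using M by (simp add: char_poly_spin_flip_gram char_poly_cnj_mult_symmetric_2x2
        wootters_tau_carrier wootters_tau_symmetric)
  show "2 * cmod (det (wootters_tau M)) \<le> frobenius_norm_sq (wootters_tau M)"
    using M by (simp add: det_le_frobenius_norm_sq_symmetric_2x2 wootters_tau_carrier
        wootters_tau_symmetric)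
qed simp

section \<open>Three qubits\<close>

definition amp_AB :: "complex vec \<Rightarrow> complex mat" where
  "amp_AB psi = mat 4 2 (\<lambda>(r, c). psi $ (2 * r + c))"

definition amp_AC :: "complex vec \<Rightarrow> complex mat" where
  "amp_AC psi = mat 4 2 (\<lambda>(r, b). psi $ (4 * (r div 2) + 2 * b + r mod 2))"

definition amp_BC :: "complex vec \<Rightarrow> complex mat" where
  "amp_BC psi = mat 4 2 (\<lambda>(r, a). psi $ (4 * a + r))"

lemma amp_carrier:
  "amp_AB psi \<in> carrier_mat 4 2" "amp_AC psi \<in> carrier_mat 4 2" "amp_BC psi \<in> carrier_mat 4 2"
  by (simp_all add: amp_AB_def amp_AC_def amp_BC_def)

lemma rho_eq_gram_amp:
  "rho_AB psi = amp_AB psi * (map_mat cnj (amp_AB psi))\<^sup>T"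
  "rho_AC psi = amp_AC psi * (map_mat cnj (amp_AC psi))\<^sup>T"
  "rho_BC psi = amp_BC psi * (map_mat cnj (amp_BC psi))\<^sup>T"
  by (auto intro!: eq_matI simp: rho_AB_def rho_AC_def rho_BC_def amp_AB_def amp_AC_def amp_BC_def
      scalar_prod_def atLeast0LessThan)

text \<open>The index arithmetic must produce the numerals \<open>psi $ 2\<close>, \<open>psi $ 3\<close>, \<dots> rather than
  \<open>Suc\<close>-terms, otherwise the ring normalisation sees different atoms for the same amplitude.\<close>

lemma det_wootters_tau_amp:
  "det (wootters_tau (amp_AB psi)) = det (wootters_tau (amp_AC psi))"
  "det (wootters_tau (amp_AC psi)) = det (wootters_tau (amp_BC psi))"
  by (simp_all add: det_2x2 wootters_tau_carrier index_wootters_tau amp_AB_def amp_AC_def amp_BC_def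
      numeral_2_eq_2[symmetric] del: One_nat_def)
    (simp_all add: algebra_simps)

text \<open>With \<open>a, b, c\<close> the local Bloch vectors, both sides equal \<open>(|a|\<^sup>2 + |b|\<^sup>2 + |c|\<^sup>2 - \<parallel>\<psi>\<parallel>\<^sup>4) / 2\<close>:
  \<open>|\<tau>|\<^sup>2 = tr (\<rho> \<rho>\<^sup>~)\<close> and the purity of \<open>\<psi>\<close> express \<open>S\<^sub>X\<^sub>Y\<close> and \<open>|\<tau>\<^sub>X\<^sub>Y|\<^sup>2\<close> through the Bloch vectors.\<close>

lemma S_corr_minus_frobenius_norm_sq_amp:
  "S_corr (rho_AB psi) - 3 * frobenius_norm_sq (wootters_tau (amp_AB psi))
     = S_corr (rho_AC psi) - 3 * frobenius_norm_sq (wootters_tau (amp_AC psi))"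
  "S_corr (rho_AC psi) - 3 * frobenius_norm_sq (wootters_tau (amp_AC psi))
     = S_corr (rho_BC psi) - 3 * frobenius_norm_sq (wootters_tau (amp_BC psi))"
  by (simp_all add: S_corr_def corr_def tr_def rho_AB_def rho_AC_def rho_BC_def kron2_def pauli_def
      mat_of_rows_list_def frobenius_norm_sq_def index_wootters_tau amp_AB_def amp_AC_def amp_BC_def
      scalar_prod_def lessThan_2_eq lessThan_4_eq atLeastAtMost_1_3_eq atLeast0LessThan cmod_power2
      numeral_2_eq_2[symmetric] del: One_nat_def)
    Groebner_Basis.algebra+

theorem theorem2:
  fixes psi :: "complex vec"
  assumes "dim_vec psi = 8"
    and "(\<Sum>i<8. (cmod (psi $ i))\<^sup>2) = 1"
  shows "(S_corr (rho_AB psi) > S_corr (rho_AC psi) \<and> S_corr (rho_AC psi) > S_corr (rho_BC psi))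
     \<longleftrightarrow> (concurrence (rho_AB psi) > concurrence (rho_AC psi) \<and>
          concurrence (rho_AC psi) > concurrence (rho_BC psi))"
proof -
  define D where "D = cmod (det (wootters_tau (amp_BC psi)))"
  have "concurrence (rho_AB psi) = sqrt (frobenius_norm_sq (wootters_tau (amp_AB psi)) - 2 * D)"
    and "concurrence (rho_AC psi) = sqrt (frobenius_norm_sq (wootters_tau (amp_AC psi)) - 2 * D)"
    and "concurrence (rho_BC psi) = sqrt (frobenius_norm_sq (wootters_tau (amp_BC psi)) - 2 * D)"
    by (simp_all add: rho_eq_gram_amp concurrence_gram amp_carrier det_wootters_tau_amp D_def)
  then show ?thesis
    using S_corr_minus_frobenius_norm_sq_amp[of psi] by (simp add: real_sqrt_less_iff) linarith
qed

end
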